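(* Let $b>3$ and let $f:B(b)\to\mathbb{C}$ be a conformal embedding (injective holomorphic map) with $f(0)=0$ and $f(z+1)=f(z)+1$ for all $z\in B(b)$. Then for all $z=x+iy\in B(b-3)$, $$|f(z)-z|\le C_2\,\frac{e^{2\pi|y|}+(b+1)^2}{e^{2\pi b}},$$ where $C_1=\sqrt{8/\pi}$ and $C_2=8\pi e^{5\pi}(C_1+1)$.
   Context: $B(b)=\{z\in\mathbb{C}:|\operatorname{Im}z|<b\}$. *)

theory Defs
  imports "HOL-Complex_Analysis.Complex_Analysis"
begin

definition strip :: "real \<Rightarrow> complex set" where
  "strip b = {z. \<bar>Im z\<bar> < b}"

end

theory Submission
  imports Defs
begin

text \<open>Bloch's theorem together with injectivity and translation equivariance bounds \<open>f'\<close> near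
  the boundary of the strip. Since \<open>f' - 1\<close> is periodic with mean zero on horizontal periods,
  Cauchy's formula with the periodic kernel on a unit-width rectangle shows that \<open>f' - 1\<close>
  decays like \<open>exp (2 \<pi> (|Im z| - b))\<close> inside; integrating this along the imaginary axis and
  then horizontally over less than one period bounds \<open>f z - z\<close>.\<close>

lemma open_strip: "open (strip b)"
  unfolding strip_def by (intro open_Collect_less continuous_intros)

lemma mem_strip_iff: "z \<in> strip b \<longleftrightarrow> \<bar>Im z\<bar> < b"
  by (simp add: strip_def)

lemma deriv_periodic_shift:
  assumes hol: "f holomorphic_on strip b"
    and per: "\<And>z. z \<in> strip b \<Longrightarrow> f (z + 1) = f z + 1"
    and w: "w \<in> strip b"
  shows "deriv f (w + 1) = deriv f w"
proof -
  have w1: "w + 1 \<in> strip b" using w by (simp add: mem_strip_iff)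
  have "((\<lambda>x. x + 1) has_field_derivative 1) (at w)"
    by (auto intro!: derivative_eq_intros)
  then have "((\<lambda>x. f (x + 1)) has_field_derivative deriv f (w + 1)) (at w)"
    using DERIV_chain2[of f "deriv f (w + 1)" "\<lambda>x. x + 1" w 1 UNIV]
      holomorphic_derivI[OF hol open_strip w1] by simp
  then have "((\<lambda>x. f x + 1) has_field_derivative deriv f (w + 1)) (at w)"
    by (rule has_field_derivative_transform_within_open[OF _ open_strip w]) (rule per)
  moreover have "((\<lambda>x. f x + 1) has_field_derivative deriv f w) (at w)"
    using holomorphic_derivI[OF hol open_strip w] by (auto intro!: derivative_eq_intros)
  ultimately show ?thesis by (rule DERIV_unique)
qed

text \<open>If \<open>|f' w| > 12\<close>, Bloch's theorem puts a disc of radius \<open>> 1/2\<close> into \<open>f (ball w (1/2))\<close>;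
  it contains two points \<open>c \<plusminus> 1/2\<close>, whose preimages then differ by exactly \<open>1\<close>.\<close>
lemma norm_deriv_le_12_if_inj_periodic:
  assumes hol: "f holomorphic_on strip b" and inj: "inj_on f (strip b)"
    and per: "\<And>z. z \<in> strip b \<Longrightarrow> f (z + 1) = f z + 1"
    and w: "\<bar>Im w\<bar> \<le> b - 1/2"
  shows "cmod (deriv f w) \<le> 12"
proof (rule ccontr)
  assume "\<not> ?thesis"
  then have r: "1/2 < 1/2 * cmod (deriv f w) / 12" by simp
  have ball_sub: "ball w (1/2) \<subseteq> strip b"
  proof
    fix u assume "u \<in> ball w (1/2)"
    then have "\<bar>Im u - Im w\<bar> < 1/2"
      using abs_Im_le_cmod[of "u - w"] by (simp add: dist_norm norm_minus_commute)
    then show "u \<in> strip b" using w unfolding mem_strip_iff by arith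
  qed
  obtain c where c: "ball c (1/2 * cmod (deriv f w) / 12) \<subseteq> f ` ball w (1/2)"
    using Bloch[OF holomorphic_on_subset[OF hol ball_sub], of "1/2 * cmod (deriv f w) / 12"]
    by auto
  have "c + 1/2 \<in> f ` ball w (1/2)" "c - 1/2 \<in> f ` ball w (1/2)"
    using r by (auto intro!: subsetD[OF c] simp: dist_norm)
  then obtain w1 w2 where w1: "w1 \<in> ball w (1/2)" "f w1 = c + 1/2"
    and w2: "w2 \<in> ball w (1/2)" "f w2 = c - 1/2"
    by (auto elim!: imageE)
  have "w2 \<in> strip b" "w1 \<in> strip b" using w1 w2 ball_sub by auto
  moreover from this have "w2 + 1 \<in> strip b" by (simp add: mem_strip_iff)
  moreover have "f (w2 + 1) = f w1" using per \<open>w2 \<in> strip b\<close> w1 w2 by simp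
  ultimately have "w1 = w2 + 1" using inj by (auto dest: inj_onD)
  moreover have "cmod (w1 - w2) < 1"
    using w1 w2 norm_triangle_lt[of "w1 - w" "w - w2" 1] by (simp add: dist_norm norm_minus_commute)
  ultimately show False by simp
qed

text \<open>\<open>periodic_kernel z w = \<pi> cot (\<pi> (w - z)) + \<pi> \<i>\<close>: the Cauchy kernel of the cylinder
  \<open>\<complex> / \<int>\<close>, with simple poles of residue \<open>1\<close> at \<open>w \<in> z + \<int>\<close>.\<close>
definition periodic_kernel :: "complex \<Rightarrow> complex \<Rightarrow> complex" where
  "periodic_kernel z w = 2 * pi * \<i> / (1 - exp (2 * pi * \<i> * (z - w)))"

lemma periodic_kernel_shift: "periodic_kernel z (w + 1) = periodic_kernel z w"
proof -
  have "2 * pi * \<i> * (z - (w + 1)) = 2 * pi * \<i> * (z - w) - 2 * pi * \<i>"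
    by (simp add: algebra_simps)
  then show ?thesis by (simp add: periodic_kernel_def exp_diff)
qed

lemma periodic_kernel_denom_nonzero:
  assumes "Im w \<noteq> Im z \<or> (\<bar>Re w - Re z\<bar> < 1 \<and> w \<noteq> z)"
  shows "1 - exp (2 * pi * \<i> * (z - w)) \<noteq> 0"
proof
  assume "1 - exp (2 * pi * \<i> * (z - w)) = 0"
  then obtain n :: int where "Im z = Im w" and "2 * pi * (Re z - Re w) = 2 * pi * of_int n"
    by (auto simp: exp_eq_1 algebra_simps)
  then have "Re z - Re w = of_int n" by simp
  with assms \<open>Im z = Im w\<close> have "n = 0" by auto
  with assms \<open>Re z - Re w = of_int n\<close> \<open>Im z = Im w\<close> show False by (auto simp: complex_eq_iff)
qed

lemma periodic_kernel_residue: "((\<lambda>w. (w - z) * periodic_kernel z w) \<longlongrightarrow> 1) (at z)"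
proof -
  define h where "h w = 1 - exp (2 * pi * \<i> * (z - w))" for w
  have "(h has_field_derivative 2 * pi * \<i>) (at z)"
    unfolding h_def by (auto intro!: derivative_eq_intros)
  then have "((\<lambda>w. h w / (w - z)) \<longlongrightarrow> 2 * pi * \<i>) (at z)"
    by (simp add: has_field_derivative_iff h_def)
  then have "((\<lambda>w. 2 * pi * \<i> / (h w / (w - z))) \<longlongrightarrow> (2 * pi * \<i>) / (2 * pi * \<i>)) (at z)"
    by (intro tendsto_divide tendsto_const) auto
  then have "((\<lambda>w. 2 * pi * \<i> / (h w / (w - z))) \<longlongrightarrow> 1) (at z)"
    by simp
  then show ?thesis
    by (rule Lim_transform_eventually)
       (auto simp: eventually_at_filter h_def periodic_kernel_def)
qed

lemma holomorphic_on_periodic_kernel_regularized: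
  "(\<lambda>w. if w = z then 1 else (w - z) * periodic_kernel z w) holomorphic_on {w. \<bar>Re w - Re z\<bar> < 1}"
  (is "?\<psi> holomorphic_on ?S")
proof (rule no_isolated_singularity'[of "{z}"])
  have "(\<lambda>w. (w - z) * periodic_kernel z w) holomorphic_on ?S - {z}"
    unfolding periodic_kernel_def using periodic_kernel_denom_nonzero
    by (intro holomorphic_intros) auto
  then show "?\<psi> holomorphic_on ?S - {z}"
    by (rule holomorphic_transform) auto
  have "(?\<psi> \<longlongrightarrow> 1) (at z)"
    using periodic_kernel_residue by (rule Lim_transform_eventually) (auto simp: eventually_at_filter)
  then show "(?\<psi> \<longlongrightarrow> ?\<psi> w) (at w within ?S)" if "w \<in> {z}" for w
    using that by (auto intro: tendsto_within_subset)
  show "open ?S" by (intro open_Collect_less continuous_intros)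
qed auto

lemma norm_periodic_kernel_sub_const_le:
  assumes "Im w = - B" "\<bar>Im z\<bar> < B"
  shows "cmod (periodic_kernel z w - 2 * pi * \<i>) \<le> 2 * pi * (1 / (exp (2 * pi * (B + Im z)) - 1))"
proof -
  define e where "e = exp (2 * pi * \<i> * (z - w))"
  define E where "E = exp (2 * pi * (B + Im z))"
  have "cmod e = exp (- (2 * pi * (B + Im z)))"
    using assms(1) by (simp add: e_def norm_exp_eq_Re algebra_simps)
  then have norm_e: "cmod e = 1 / E" by (simp add: E_def exp_minus inverse_eq_divide)
  have "1 < E" using assms by (simp add: E_def)
  moreover have "1 - 1 / E \<le> cmod (1 - e)"
    using norm_triangle_ineq2[of 1 e] norm_e by simp
  ultimately have "1 - e \<noteq> 0" by auto
  then have "periodic_kernel z w - 2 * pi * \<i> = 2 * pi * \<i> * e / (1 - e)"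
    by (simp add: periodic_kernel_def e_def field_simps)
  then have "cmod (periodic_kernel z w - 2 * pi * \<i>) = 2 * pi * (1 / E) / cmod (1 - e)"
    by (simp add: norm_divide norm_mult norm_e)
  also have "\<dots> \<le> 2 * pi * (1 / E) / (1 - 1 / E)"
    using \<open>1 < E\<close> \<open>1 - 1 / E \<le> cmod (1 - e)\<close> by (intro frac_le) auto
  also have "\<dots> = 2 * pi * (1 / (E - 1))"
    using \<open>1 < E\<close> by (simp add: field_simps)
  finally show ?thesis by (simp add: E_def)
qed

lemma norm_periodic_kernel_le:
  assumes "Im w = B" "\<bar>Im z\<bar> < B"
  shows "cmod (periodic_kernel z w) \<le> 2 * pi * (1 / (exp (2 * pi * (B - Im z)) - 1))"
proof -
  define e where "e = exp (2 * pi * \<i> * (z - w))"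
  define E where "E = exp (2 * pi * (B - Im z))"
  have norm_e: "cmod e = E"
    using assms(1) by (simp add: e_def E_def norm_exp_eq_Re algebra_simps)
  have "1 < E" using assms by (simp add: E_def)
  moreover have "E - 1 \<le> cmod (1 - e)"
    using norm_triangle_ineq2[of e 1] norm_e by (simp add: norm_minus_commute)
  ultimately have "cmod (periodic_kernel z w) \<le> 2 * pi / (E - 1)"
    by (auto simp: periodic_kernel_def e_def norm_divide norm_mult intro!: frac_le)
  then show ?thesis by (simp add: E_def)
qed

lemma rectpath_integral_eq_horizontal_sides:
  fixes a1 a3 :: complex
  defines "a2 \<equiv> Complex (Re a3) (Im a1)" and "a4 \<equiv> Complex (Re a1) (Im a3)"
  assumes int: "(F has_contour_integral I) (rectpath a1 a3)"
    and cont: "continuous_on (path_image (rectpath a1 a3)) F"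
    and width: "Re a3 = Re a1 + 1"
    and per: "\<And>w. w \<in> closed_segment a1 a4 \<Longrightarrow> F (w + 1) = F w"
  shows "I = contour_integral (linepath a1 a2) F + contour_integral (linepath a3 a4) F"
proof -
  have pim: "path_image (rectpath a1 a3) =
      closed_segment a1 a2 \<union> closed_segment a2 a3 \<union> closed_segment a3 a4 \<union> closed_segment a4 a1"
    by (simp add: rectpath_def Let_def path_image_join a2_def a4_def Un_assoc)
  have side: "(F has_contour_integral contour_integral (linepath p q) F) (linepath p q)"
    if "closed_segment p q \<subseteq> path_image (rectpath a1 a3)" for p q
    using that cont
    by (intro has_contour_integral_integral contour_integrable_continuous_linepath)
       (rule continuous_on_subset)
  have "(F has_contour_integral
          (contour_integral (linepath a1 a2) F + (contour_integral (linepath a2 a3) F +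
           (contour_integral (linepath a3 a4) F + contour_integral (linepath a4 a1) F))))
        (rectpath a1 a3)"
    unfolding rectpath_def Let_def a2_def [symmetric] a4_def [symmetric]
    by (intro has_contour_integral_join side valid_path_join valid_path_linepath)
       (auto simp: pim)
  then have sum: "I = contour_integral (linepath a1 a2) F + (contour_integral (linepath a2 a3) F +
           (contour_integral (linepath a3 a4) F + contour_integral (linepath a4 a1) F))"
    using has_contour_integral_unique[OF int] by blast
  have shift: "a1 + 1 = a2" "a4 + 1 = a3"
    using width by (simp_all add: a2_def a4_def complex_eq_iff)
  have "((\<lambda>w. F (w + 1)) has_contour_integral contour_integral (linepath a2 a3) F) (linepath a1 a4)"
    using has_contour_integral_translate[of F _ 1 "linepath a1 a4"] side[of a2 a3]
    by (auto simp: linepath_translate shift pim)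
  then have "(F has_contour_integral contour_integral (linepath a2 a3) F) (linepath a1 a4)"
    by (rule has_contour_integral_eq) (simp add: per)
  then have "contour_integral (linepath a4 a1) F = - contour_integral (linepath a2 a3) F"
    using has_contour_integral_reversepath[of "linepath a1 a4"]
      has_contour_integral_unique[OF side[of a4 a1]] by (simp add: pim)
  with sum show ?thesis by simp
qed

lemma convex_strip: "convex (strip b)"
proof -
  have "strip b = {w. Im w < b} \<inter> {w. Im w > - b}" by (auto simp: strip_def)
  then show ?thesis by (simp add: convex_Int convex_halfspace_Im_lt convex_halfspace_Im_gt)
qed

lemma holomorphic_on_mult_periodic_kernel:
  assumes "G holomorphic_on strip b"
  shows "(\<lambda>w. G w * periodic_kernel z w) holomorphic_on strip b \<inter> {w. \<bar>Re w - Re z\<bar> < 1} - {z}"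
  unfolding periodic_kernel_def
proof (intro holomorphic_intros)
  show "G holomorphic_on strip b \<inter> {w. \<bar>Re w - Re z\<bar> < 1} - {z}"
    using assms by (rule holomorphic_on_subset) auto
qed (use periodic_kernel_denom_nonzero in auto)

lemma path_image_unit_rectpath:
  assumes "B < b" "\<bar>Im z\<bar> < B"
  shows "path_image (rectpath (Complex (Re z - 1/2) (- B)) (Complex (Re z + 1/2) B))
           \<subseteq> strip b \<inter> {w. \<bar>Re w - Re z\<bar> < 1} - {z}"
  using assms by (subst path_image_rectpath) (auto simp: mem_strip_iff)

lemma has_contour_integral_periodic_kernel_rectpath:
  fixes G :: "complex \<Rightarrow> complex"
  assumes holG: "G holomorphic_on strip b" and "B < b" and z: "\<bar>Im z\<bar> < B"
  shows "((\<lambda>w. G w * periodic_kernel z w) has_contour_integral 2 * pi * \<i> * G z)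
           (rectpath (Complex (Re z - 1/2) (- B)) (Complex (Re z + 1/2) B))"
proof -
  define S where "S = strip b \<inter> {w. \<bar>Re w - Re z\<bar> < 1}"
  define \<psi> where "\<psi> w = (if w = z then 1 else (w - z) * periodic_kernel z w)" for w
  have S: "open S" "convex S"
  proof -
    have "{w. \<bar>Re w - Re z\<bar> < 1} = {w. Re w < Re z + 1} \<inter> {w. Re w > Re z - 1}" by auto
    then show "convex S" unfolding S_def
      by (simp add: convex_Int convex_strip convex_halfspace_Re_lt convex_halfspace_Re_gt)
    show "open S" unfolding S_def
      by (intro open_Int open_strip open_Collect_less continuous_intros)
  qed
  have "(\<lambda>w. G w * \<psi> w) holomorphic_on S"
    using holomorphic_on_subset[OF holG] holomorphic_on_subset[OF holomorphic_on_periodic_kernel_regularized]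
    unfolding \<psi>_def S_def by (intro holomorphic_intros) auto
  moreover have "z \<in> S" "z \<in> box (Complex (Re z - 1/2) (- B)) (Complex (Re z + 1/2) B)"
    using z \<open>B < b\<close> by (auto simp: S_def mem_strip_iff in_box_complex_iff)
  moreover note pim = path_image_unit_rectpath[OF \<open>B < b\<close> z, folded S_def]
  ultimately have "((\<lambda>w. G w * \<psi> w / (w - z)) has_contour_integral 2 * pi * \<i> * G z)
                     (rectpath (Complex (Re z - 1/2) (- B)) (Complex (Re z + 1/2) B))"
    using Cauchy_integral_formula_convex_simple[OF S(2), of "\<lambda>w. G w * \<psi> w" z
        "rectpath (Complex (Re z - 1/2) (- B)) (Complex (Re z + 1/2) B)"]
    by (simp add: interior_open S winding_number_rectpath \<psi>_def)
  then show ?thesis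
    by (rule has_contour_integral_eq) (use pim in \<open>auto simp: \<psi>_def\<close>)
qed

lemma periodic_Cauchy_formula:
  fixes G :: "complex \<Rightarrow> complex"
  assumes holG: "G holomorphic_on strip b"
    and perG: "\<And>w. w \<in> strip b \<Longrightarrow> G (w + 1) = G w"
    and "B < b" and z: "\<bar>Im z\<bar> < B"
  shows "2 * pi * \<i> * G z =
      contour_integral (linepath (Complex (Re z - 1/2) (- B)) (Complex (Re z + 1/2) (- B)))
        (\<lambda>w. G w * periodic_kernel z w) +
      contour_integral (linepath (Complex (Re z + 1/2) B) (Complex (Re z - 1/2) B))
        (\<lambda>w. G w * periodic_kernel z w)"
proof -
  define a1 where "a1 = Complex (Re z - 1/2) (- B)"
  define a3 where "a3 = Complex (Re z + 1/2) B"
  note pim = path_image_unit_rectpath[OF \<open>B < b\<close> z, folded a1_def a3_def]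
  have "2 * pi * \<i> * G z =
      contour_integral (linepath a1 (Complex (Re a3) (Im a1))) (\<lambda>w. G w * periodic_kernel z w) +
      contour_integral (linepath a3 (Complex (Re a1) (Im a3))) (\<lambda>w. G w * periodic_kernel z w)"
  proof (rule rectpath_integral_eq_horizontal_sides)
    show "((\<lambda>w. G w * periodic_kernel z w) has_contour_integral 2 * pi * \<i> * G z) (rectpath a1 a3)"
      unfolding a1_def a3_def by (rule has_contour_integral_periodic_kernel_rectpath[OF holG \<open>B < b\<close> z])
    show "continuous_on (path_image (rectpath a1 a3)) (\<lambda>w. G w * periodic_kernel z w)"
      using pim holomorphic_on_mult_periodic_kernel[OF holG]
      by (blast intro: continuous_on_subset holomorphic_on_imp_continuous_on)
    have "closed_segment a1 (Complex (Re a1) (Im a3)) \<subseteq> path_image (rectpath a1 a3)"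
      by (auto simp: rectpath_def Let_def path_image_join closed_segment_commute)
    then show "G (w + 1) * periodic_kernel z (w + 1) = G w * periodic_kernel z w"
      if "w \<in> closed_segment a1 (Complex (Re a1) (Im a3))" for w
      using that pim by (auto simp: perG periodic_kernel_shift)
  qed (simp add: a1_def a3_def)
  then show ?thesis by (simp add: a1_def a3_def)
qed

lemma continuous_on_periodic_kernel_horizontal:
  assumes "G holomorphic_on strip b" "Im p = Im q" "\<bar>Im p\<bar> < b" "Im p \<noteq> Im z"
  shows "continuous_on (closed_segment p q) (\<lambda>w. G w * periodic_kernel z w)"
proof -
  have seg: "closed_segment p q \<subseteq> strip b \<inter> {w. Im w = Im p}"
    using assms(2,3) by (auto simp: closed_segment_same_Im mem_strip_iff)
  have "G holomorphic_on closed_segment p q"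
    using seg by (intro holomorphic_on_subset[OF assms(1)]) auto
  moreover have "1 - exp (2 * pi * \<i> * (z - w)) \<noteq> 0" if "w \<in> closed_segment p q" for w
    using that seg assms(4) by (intro periodic_kernel_denom_nonzero) auto
  ultimately show ?thesis
    unfolding periodic_kernel_def
    by (intro continuous_intros holomorphic_on_imp_continuous_on) auto
qed

text \<open>Zero mean lets us replace the kernel by its exponentially small deviation from \<open>2 \<pi> \<i>\<close>.\<close>
lemma norm_contour_integral_periodic_kernel_below_le:
  assumes mean: "(G has_contour_integral 0) (linepath p q)"
    and int: "(\<lambda>w. G w * periodic_kernel z w) contour_integrable_on linepath p q"
    and pq: "Im p = - B" "Im q = - B" and z: "\<bar>Im z\<bar> < B"
    and bound: "\<And>w. w \<in> closed_segment p q \<Longrightarrow> cmod (G w) \<le> M" and "0 \<le> M"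
  shows "cmod (contour_integral (linepath p q) (\<lambda>w. G w * periodic_kernel z w))
           \<le> M * (2 * pi * (1 / (exp (2 * pi * (B + Im z)) - 1))) * cmod (q - p)"
proof (rule has_contour_integral_bound_linepath)
  show "((\<lambda>w. G w * periodic_kernel z w - 2 * pi * \<i> * G w) has_contour_integral
          contour_integral (linepath p q) (\<lambda>w. G w * periodic_kernel z w)) (linepath p q)"
    using has_contour_integral_diff[OF has_contour_integral_integral[OF int]
        has_contour_integral_lmul[OF mean]] by simp
  show "0 \<le> M * (2 * pi * (1 / (exp (2 * pi * (B + Im z)) - 1)))"
    using z \<open>0 \<le> M\<close> by simp
  fix w assume w: "w \<in> closed_segment p q"
  then have "Im w = - B" using pq by (simp add: closed_segment_same_Im)
  then have "cmod (periodic_kernel z w - 2 * pi * \<i>) \<le> 2 * pi * (1 / (exp (2 * pi * (B + Im z)) - 1))"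
    by (rule norm_periodic_kernel_sub_const_le[OF _ z])
  then show "cmod (G w * periodic_kernel z w - 2 * pi * \<i> * G w)
               \<le> M * (2 * pi * (1 / (exp (2 * pi * (B + Im z)) - 1)))"
    unfolding mult.commute[of "2 * pi * \<i>"] norm_mult right_diff_distrib [symmetric]
    by (rule mult_mono'[OF bound[OF w]]) simp_all
qed

lemma norm_contour_integral_periodic_kernel_above_le:
  assumes int: "(\<lambda>w. G w * periodic_kernel z w) contour_integrable_on linepath p q"
    and pq: "Im p = B" "Im q = B" and z: "\<bar>Im z\<bar> < B"
    and bound: "\<And>w. w \<in> closed_segment p q \<Longrightarrow> cmod (G w) \<le> M" and "0 \<le> M"
  shows "cmod (contour_integral (linepath p q) (\<lambda>w. G w * periodic_kernel z w))
           \<le> M * (2 * pi * (1 / (exp (2 * pi * (B - Im z)) - 1))) * cmod (q - p)"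
proof (rule contour_integral_bound_linepath[OF int])
  show "0 \<le> M * (2 * pi * (1 / (exp (2 * pi * (B - Im z)) - 1)))"
    using z \<open>0 \<le> M\<close> by simp
  fix w assume w: "w \<in> closed_segment p q"
  then have "Im w = B" using pq by (simp add: closed_segment_same_Im)
  then have "cmod (periodic_kernel z w) \<le> 2 * pi * (1 / (exp (2 * pi * (B - Im z)) - 1))"
    by (rule norm_periodic_kernel_le[OF _ z])
  then show "cmod (G w * periodic_kernel z w) \<le> M * (2 * pi * (1 / (exp (2 * pi * (B - Im z)) - 1)))"
    unfolding norm_mult by (rule mult_mono'[OF bound[OF w]]) simp_all
qed

lemma norm_le_if_periodic_zero_mean:
  fixes G :: "complex \<Rightarrow> complex"
  assumes holG: "G holomorphic_on strip b"
    and perG: "\<And>w. w \<in> strip b \<Longrightarrow> G (w + 1) = G w"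
    and "B < b"
    and bound: "\<And>w. \<bar>Im w\<bar> \<le> B \<Longrightarrow> cmod (G w) \<le> M"
    and mean: "\<And>x. (G has_contour_integral 0) (linepath (Complex x (- B)) (Complex (x + 1) (- B)))"
    and z: "\<bar>Im z\<bar> < B"
  shows "cmod (G z) \<le> M * (1 / (exp (2 * pi * (B + Im z)) - 1) + 1 / (exp (2 * pi * (B - Im z)) - 1))"
proof -
  define F where "F = (\<lambda>w. G w * periodic_kernel z w)"
  define a1 where "a1 = Complex (Re z - 1/2) (- B)"
  define a2 where "a2 = Complex (Re z + 1/2) (- B)"
  define a3 where "a3 = Complex (Re z + 1/2) B"
  define a4 where "a4 = Complex (Re z - 1/2) B"
  have "0 \<le> M" using order_trans[OF norm_ge_zero bound[of 0]] z by simp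
  have int: "F contour_integrable_on linepath a1 a2" "F contour_integrable_on linepath a3 a4"
    using z \<open>B < b\<close> unfolding F_def a1_def a2_def a3_def a4_def
    by (intro contour_integrable_continuous_linepath continuous_on_periodic_kernel_horizontal[OF holG];
        simp)+
  have bound': "cmod (G w) \<le> M" if "w \<in> closed_segment a1 a2 \<union> closed_segment a3 a4" for w
    using that z by (intro bound) (auto simp: closed_segment_same_Im a1_def a2_def a3_def a4_def)
  have "a2 - a1 = 1" "a4 - a3 = - 1"
    by (simp_all add: a1_def a2_def a3_def a4_def complex_eq_iff)
  then have unit: "cmod (a2 - a1) = 1" "cmod (a4 - a3) = 1" by simp_all
  have "cmod (2 * pi * \<i> * G z)
          \<le> cmod (contour_integral (linepath a1 a2) F) + cmod (contour_integral (linepath a3 a4) F)"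
    using periodic_Cauchy_formula[OF holG perG \<open>B < b\<close> z] norm_triangle_ineq
    by (simp add: F_def a1_def a2_def a3_def a4_def)
  also have "\<dots> \<le> M * (2 * pi * (1 / (exp (2 * pi * (B + Im z)) - 1))) * cmod (a2 - a1)
                  + M * (2 * pi * (1 / (exp (2 * pi * (B - Im z)) - 1))) * cmod (a4 - a3)"
    unfolding F_def
  proof (intro add_mono norm_contour_integral_periodic_kernel_below_le
           norm_contour_integral_periodic_kernel_above_le int[unfolded F_def] bound' \<open>0 \<le> M\<close> z)
    show "(G has_contour_integral 0) (linepath a1 a2)"
      using mean[of "Re z - 1/2"] by (simp add: a1_def a2_def add.commute)
  qed (auto simp: a1_def a2_def a3_def a4_def)
  also have "\<dots> = 2 * pi * (M * (1 / (exp (2 * pi * (B + Im z)) - 1) + 1 / (exp (2 * pi * (B - Im z)) - 1)))"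
    using unit by (simp add: algebra_simps)
  finally show ?thesis by (simp add: norm_mult)
qed

lemma deriv_sub_one_has_contour_integral_zero:
  assumes hol: "f holomorphic_on strip b"
    and per: "\<And>z. z \<in> strip b \<Longrightarrow> f (z + 1) = f z + 1"
    and c: "\<bar>c\<bar> < b"
  shows "((\<lambda>w. deriv f w - 1) has_contour_integral 0) (linepath (Complex x c) (Complex (x + 1) c))"
proof -
  have "((\<lambda>w. f w - w) has_field_derivative deriv f w - 1) (at w within strip b)"
    if "w \<in> strip b" for w
    by (rule has_field_derivative_at_within
             [OF DERIV_diff[OF holomorphic_derivI[OF hol open_strip that] DERIV_ident]])
  moreover have "path_image (linepath (Complex x c) (Complex (x + 1) c)) \<subseteq> strip b"
    using c by (auto simp: closed_segment_same_Im mem_strip_iff)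
  ultimately have "((\<lambda>w. deriv f w - 1) has_contour_integral
      ((f (Complex (x + 1) c) - Complex (x + 1) c) - (f (Complex x c) - Complex x c)))
      (linepath (Complex x c) (Complex (x + 1) c))"
    using contour_integral_primitive[of "strip b" "\<lambda>w. f w - w" "\<lambda>w. deriv f w - 1"
        "linepath (Complex x c) (Complex (x + 1) c)"] by simp
  moreover have "(f (Complex (x + 1) c) - Complex (x + 1) c) - (f (Complex x c) - Complex x c) = 0"
  proof -
    have "Complex (x + 1) c = Complex x c + 1" by (simp add: complex_eq_iff)
    moreover have "Complex x c \<in> strip b" using c by (simp add: mem_strip_iff)
    ultimately show ?thesis using per by (metis add_diff_cancel_right diff_self)
  qed
  ultimately show ?thesis by simp
qed

lemma norm_deriv_sub_one_le_kernel_bounds: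
  assumes hol: "f holomorphic_on strip b" and inj: "inj_on f (strip b)"
    and per: "\<And>z. z \<in> strip b \<Longrightarrow> f (z + 1) = f z + 1"
    and w: "\<bar>Im w\<bar> < b - 1/2"
  shows "cmod (deriv f w - 1) \<le> 13 * (1 / (exp (2 * pi * ((b - 1/2) + Im w)) - 1)
                                      + 1 / (exp (2 * pi * ((b - 1/2) - Im w)) - 1))"
proof (rule norm_le_if_periodic_zero_mean)
  show "(\<lambda>w. deriv f w - 1) holomorphic_on strip b"
    by (intro holomorphic_intros holomorphic_deriv hol open_strip)
  show "deriv f (u + 1) - 1 = deriv f u - 1" if "u \<in> strip b" for u
    using deriv_periodic_shift[OF hol per that] by simp
  show "cmod (deriv f u - 1) \<le> 13" if "\<bar>Im u\<bar> \<le> b - 1/2" for u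
    using norm_deriv_le_12_if_inj_periodic[OF hol inj per that] norm_triangle_ineq4[of "deriv f u" 1]
    by simp
  show "((\<lambda>w. deriv f w - 1) has_contour_integral 0)
          (linepath (Complex x (- (b - 1/2))) (Complex (x + 1) (- (b - 1/2))))" for x
    using w by (intro deriv_sub_one_has_contour_integral_zero[OF hol per]) auto
qed (use w in simp_all)

lemma inverse_exp_sub_one_le:
  fixes t u :: real
  assumes "1 \<le> t" "- t \<le> u"
  shows "1 / (exp t - 1) \<le> 2 * exp u"
proof -
  have "2 \<le> exp t" using exp_ge_add_one_self[of t] assms by linarith
  moreover have "0 < exp t - 1" using \<open>2 \<le> exp t\<close> by linarith
  ultimately have "1 / (exp t - 1) \<le> 2 / exp t" by (simp add: field_simps)
  also have "\<dots> = 2 * exp (- t)" by (simp add: exp_minus field_simps)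
  also have "\<dots> \<le> 2 * exp u" using assms(2) by simp
  finally show ?thesis .
qed

lemma norm_deriv_sub_one_le:
  assumes hol: "f holomorphic_on strip b" and inj: "inj_on f (strip b)"
    and per: "\<And>z. z \<in> strip b \<Longrightarrow> f (z + 1) = f z + 1"
    and w: "\<bar>Im w\<bar> \<le> b - 3"
  shows "cmod (deriv f w - 1) \<le> 52 * exp (2 * pi * \<bar>Im w\<bar> + pi - 2 * pi * b)"
proof -
  define u where "u = 2 * pi * \<bar>Im w\<bar> + pi - 2 * pi * b"
  define t where "t = 2 * pi * ((b - 1/2) + Im w)"
  define s where "s = 2 * pi * ((b - 1/2) - Im w)"
  have "2 * pi * (5/2) \<le> t" "2 * pi * (5/2) \<le> s"
    using w by (simp_all add: t_def s_def abs_le_iff)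
  then have "1 \<le> t" "1 \<le> s" using pi_ge_two by linarith+
  moreover have "- t \<le> u" "- s \<le> u"
  proof -
    have "2 * pi * (- Im w) \<le> 2 * pi * \<bar>Im w\<bar>" "2 * pi * Im w \<le> 2 * pi * \<bar>Im w\<bar>"
      by (intro mult_left_mono; simp)+
    then show "- t \<le> u" "- s \<le> u" by (simp_all add: t_def s_def u_def algebra_simps)
  qed
  ultimately have "1 / (exp t - 1) + 1 / (exp s - 1) \<le> 4 * exp u"
    using inverse_exp_sub_one_le[of t u] inverse_exp_sub_one_le[of s u] by linarith
  moreover have "cmod (deriv f w - 1) \<le> 13 * (1 / (exp t - 1) + 1 / (exp s - 1))"
    using norm_deriv_sub_one_le_kernel_bounds[OF hol inj per] w by (simp add: t_def s_def)
  ultimately show ?thesis by (simp add: u_def)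
qed

lemma norm_le_of_doubling_increments:
  fixes h :: "real \<Rightarrow> 'a::real_normed_vector" and c :: "real \<Rightarrow> real"
  assumes h0: "h 0 = 0"
    and c_nonneg: "\<And>t. 0 \<le> c t" and c_mono: "mono c"
    and c_doubling: "\<And>t. 2 * c t \<le> c (t + 1)"
    and step: "\<And>s t. \<bar>s\<bar> \<le> \<bar>t\<bar> \<Longrightarrow> \<bar>t - s\<bar> \<le> 1 \<Longrightarrow> \<bar>t\<bar> \<le> L \<Longrightarrow> norm (h t - h s) \<le> c \<bar>t\<bar>"
    and t: "\<bar>t\<bar> \<le> L"
  shows "norm (h t) \<le> 2 * c (\<bar>t\<bar> + 1)"
proof -
  have "norm (h t) \<le> 2 * c (real n)" if "\<bar>t\<bar> \<le> real n" "\<bar>t\<bar> \<le> L" for n t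
    using that
  proof (induction n arbitrary: t)
    case 0
    then show ?case using h0 c_nonneg[of 0] by simp
  next
    case (Suc n)
    have c_le: "c (real n) \<le> c (real (Suc n))" using c_mono by (simp add: mono_def)
    show ?case
    proof (cases "\<bar>t\<bar> \<le> real n")
      case True
      then show ?thesis using Suc.IH[OF True Suc.prems(2)] c_le by linarith
    next
      case False
      define s where "s = (if 0 \<le> t then real n else - real n)"
      have s: "\<bar>s\<bar> = real n" "\<bar>s\<bar> \<le> \<bar>t\<bar>" "\<bar>t - s\<bar> \<le> 1"
        using False Suc.prems(1) by (auto simp: s_def)
      have "norm (h t) \<le> norm (h s) + norm (h t - h s)"
        by (rule norm_triangle_sub)
      also have "\<dots> \<le> 2 * c (real n) + c \<bar>t\<bar>"
        using Suc.IH[of s] step[OF s(2,3) Suc.prems(2)] s Suc.prems(2) by simp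
      also have "\<dots> \<le> c (real (Suc n)) + c (real (Suc n))"
        using c_doubling[of "real n"] monoD[OF c_mono Suc.prems(1)] by (simp add: add.commute)
      finally show ?thesis by simp
    qed
  qed
  moreover have "\<bar>t\<bar> \<le> real (nat \<lceil>\<bar>t\<bar>\<rceil>)" "real (nat \<lceil>\<bar>t\<bar>\<rceil>) \<le> \<bar>t\<bar> + 1"
    by linarith+
  ultimately show ?thesis
    using t monoD[OF c_mono] by (meson mult_left_mono order_trans zero_le_numeral)
qed

lemma shift_of_int_periodic:
  assumes per: "\<And>z. z \<in> strip b \<Longrightarrow> f (z + 1) = f z + 1" and z: "z \<in> strip b"
  shows "f (z + of_int k) = f z + of_int k"
proof (induction k rule: int_induct[where k = 0])
  case (step1 i)
  have "z + of_int i \<in> strip b" using z by (simp add: mem_strip_iff)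
  then show ?case using per[of "z + of_int i"] step1 by (simp add: add.assoc)
next
  case (step2 i)
  have "z + of_int (i - 1) \<in> strip b" using z by (simp add: mem_strip_iff)
  then have "f (z + of_int (i - 1) + 1) = f (z + of_int (i - 1)) + 1" by (rule per)
  then show ?case using step2 by (simp add: algebra_simps)
qed simp

lemma norm_sub_ident_diff_le:
  assumes hol: "f holomorphic_on strip b" and inj: "inj_on f (strip b)"
    and per: "\<And>z. z \<in> strip b \<Longrightarrow> f (z + 1) = f z + 1"
    and pq: "\<bar>Im p\<bar> \<le> K" "\<bar>Im q\<bar> \<le> K" and K: "K \<le> b - 3"
  shows "cmod ((f q - q) - (f p - p)) \<le> 52 * exp (2 * pi * K + pi - 2 * pi * b) * cmod (q - p)"
proof (rule field_differentiable_bound[of "closed_segment p q" "\<lambda>w. f w - w" "\<lambda>w. deriv f w - 1"])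
  have "{w. \<bar>Im w\<bar> \<le> K} = {w. Im w \<le> K} \<inter> {w. Im w \<ge> - K}" by auto
  then have "convex {w. \<bar>Im w\<bar> \<le> K}"
    by (simp add: convex_Int convex_halfspace_Im_le convex_halfspace_Im_ge)
  then have seg: "closed_segment p q \<subseteq> {w. \<bar>Im w\<bar> \<le> K}"
    using pq by (intro closed_segment_subset) auto
  fix w assume "w \<in> closed_segment p q"
  with seg have w: "\<bar>Im w\<bar> \<le> K" by auto
  then have "w \<in> strip b" using K by (simp add: mem_strip_iff)
  then show "((\<lambda>w. f w - w) has_field_derivative deriv f w - 1) (at w within closed_segment p q)"
    by (rule has_field_derivative_at_within
             [OF DERIV_diff[OF holomorphic_derivI[OF hol open_strip] DERIV_ident]])
  have "cmod (deriv f w - 1) \<le> 52 * exp (2 * pi * \<bar>Im w\<bar> + pi - 2 * pi * b)"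
    using norm_deriv_sub_one_le[OF hol inj per order_trans[OF w K]] .
  also have "\<dots> \<le> 52 * exp (2 * pi * K + pi - 2 * pi * b)"
    using w by simp
  finally show "cmod (deriv f w - 1) \<le> 52 * exp (2 * pi * K + pi - 2 * pi * b)" .
qed auto

lemma norm_sub_ident_imaginary_axis_le:
  assumes hol: "f holomorphic_on strip b" and inj: "inj_on f (strip b)"
    and f0: "f 0 = 0" and per: "\<And>z. z \<in> strip b \<Longrightarrow> f (z + 1) = f z + 1"
    and y: "\<bar>y\<bar> \<le> b - 3"
  shows "cmod (f (\<i> * of_real y) - \<i> * of_real y) \<le> 2 * (52 * exp (2 * pi * (\<bar>y\<bar> + 1) + pi - 2 * pi * b))"
proof (rule norm_le_of_doubling_increments[where h = "\<lambda>t. f (\<i> * of_real t) - \<i> * of_real t"])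
  define c where "c t = 52 * exp (2 * pi * t + pi - 2 * pi * b)" for t
  have "2 \<le> exp (2 * pi)" using exp_ge_add_one_self[of "2 * pi"] pi_ge_two by linarith
  moreover have "c (t + 1) = exp (2 * pi) * c t" for t
    by (simp add: c_def distrib_left add.commute add.left_commute flip: exp_add)
  ultimately show "2 * c t \<le> c (t + 1)" for t
    by (simp add: c_def)
  show "mono c" by (auto simp: mono_def c_def)
  show "cmod ((f (\<i> * of_real t) - \<i> * of_real t) - (f (\<i> * of_real s) - \<i> * of_real s)) \<le> c \<bar>t\<bar>"
    if "\<bar>s\<bar> \<le> \<bar>t\<bar>" "\<bar>t - s\<bar> \<le> 1" "\<bar>t\<bar> \<le> b - 3" for s t
  proof -
    have "cmod ((f (\<i> * of_real t) - \<i> * of_real t) - (f (\<i> * of_real s) - \<i> * of_real s))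
            \<le> c \<bar>t\<bar> * \<bar>t - s\<bar>"
      using norm_sub_ident_diff_le[OF hol inj per, of "\<i> * of_real s" "\<bar>t\<bar>" "\<i> * of_real t"] that
      by (simp add: c_def norm_mult flip: right_diff_distrib of_real_diff)
    also have "\<dots> \<le> c \<bar>t\<bar>"
      using that(2) by (intro mult_left_le) (simp_all add: c_def)
    finally show ?thesis .
  qed
qed (use f0 y in \<open>simp_all\<close>)

text \<open>Move horizontally from \<open>\<i> Im z\<close> to the integer translate of \<open>z\<close> in \<open>0 \<le> Re z < 1\<close>.\<close>
lemma norm_sub_ident_le:
  assumes hol: "f holomorphic_on strip b" and inj: "inj_on f (strip b)"
    and f0: "f 0 = 0" and per: "\<And>z. z \<in> strip b \<Longrightarrow> f (z + 1) = f z + 1"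
    and z: "z \<in> strip (b - 3)"
  shows "cmod (f z - z) \<le> (1 + 2 * exp (2 * pi)) * (52 * exp (2 * pi * \<bar>Im z\<bar> + pi - 2 * pi * b))"
proof -
  define g where "g w = f w - w" for w
  define c where "c = 52 * exp (2 * pi * \<bar>Im z\<bar> + pi - 2 * pi * b)"
  define z' where "z' = z - of_int \<lfloor>Re z\<rfloor>"
  have "cmod (z' - \<i> * of_real (Im z)) \<le> 1"
  proof -
    have "z' - \<i> * of_real (Im z) = of_real (Re z - of_int \<lfloor>Re z\<rfloor>)"
      by (simp add: z'_def complex_eq_iff)
    then show ?thesis by (simp only: norm_of_real) linarith
  qed
  have "cmod (g z' - g (\<i> * of_real (Im z))) \<le> c * cmod (z' - \<i> * of_real (Im z))"
    using norm_sub_ident_diff_le[OF hol inj per, of "\<i> * of_real (Im z)" "\<bar>Im z\<bar>" z'] z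
    by (simp add: g_def c_def z'_def mem_strip_iff)
  also have "\<dots> \<le> c"
    using \<open>cmod (z' - \<i> * of_real (Im z)) \<le> 1\<close> by (intro mult_left_le) (simp_all add: c_def)
  finally have horizontal: "cmod (g z' - g (\<i> * of_real (Im z))) \<le> c" .
  have "exp (2 * pi * (\<bar>Im z\<bar> + 1) + pi - 2 * pi * b) = exp (2 * pi) * exp (2 * pi * \<bar>Im z\<bar> + pi - 2 * pi * b)"
    by (simp add: algebra_simps flip: exp_add)
  then have vertical: "cmod (g (\<i> * of_real (Im z))) \<le> 2 * exp (2 * pi) * c"
    using norm_sub_ident_imaginary_axis_le[OF hol inj f0 per, of "Im z"] z
    by (simp add: g_def c_def mem_strip_iff)
  have "g z = g z'"
    using shift_of_int_periodic[of b f z' "\<lfloor>Re z\<rfloor>", OF per] z by (simp add: g_def z'_def mem_strip_iff)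
  then have "cmod (g z) \<le> cmod (g z' - g (\<i> * of_real (Im z))) + cmod (g (\<i> * of_real (Im z)))"
    using norm_triangle_sub[of "g z'" "g (\<i> * of_real (Im z))"] by simp
  with horizontal vertical show ?thesis by (simp add: g_def c_def algebra_simps)
qed

lemma explicit_constant_le:
  fixes y b :: real
  shows "(1 + 2 * exp (2 * pi)) * (52 * exp (2 * pi * y + pi - 2 * pi * b))
           \<le> 8 * pi * exp (5 * pi) * (sqrt (8 / pi) + 1) * (exp (2 * pi * y) + (b + 1)^2) / exp (2 * pi * b)"
proof -
  define E where "E = exp (2 * pi)"
  have "7 \<le> E" using exp_ge_add_one_self[of "2 * pi"] pi_gt3 unfolding E_def by linarith
  have k: "24 \<le> 8 * pi * (sqrt (8 / pi) + 1)"
  proof -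
    have "0 \<le> 8 * pi * sqrt (8 / pi)" by simp
    then show ?thesis using pi_gt3 unfolding distrib_left by linarith
  qed
  have "(1 + 2 * E) * 52 * exp pi \<le> 112 * E * exp pi"
    using \<open>7 \<le> E\<close> by (intro mult_right_mono) simp_all
  also have "\<dots> \<le> 24 * E * E * exp pi"
    using \<open>7 \<le> E\<close> by (intro mult_right_mono) simp_all
  also have "\<dots> \<le> 8 * pi * (sqrt (8 / pi) + 1) * (exp pi * E * E)"
    using k \<open>7 \<le> E\<close> mult_right_mono[OF k, of "exp pi * E * E"] by (simp add: mult_ac)
  also have "exp pi * E * E = exp (5 * pi)"
    by (simp add: E_def flip: exp_add)
  finally have const: "(1 + 2 * exp (2 * pi)) * 52 * exp pi \<le> 8 * pi * exp (5 * pi) * (sqrt (8 / pi) + 1)"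
    by (simp add: E_def mult_ac distrib_left)
  have "(1 + 2 * exp (2 * pi)) * (52 * exp (2 * pi * y + pi - 2 * pi * b))
        = (1 + 2 * exp (2 * pi)) * 52 * exp pi * exp (2 * pi * y) / exp (2 * pi * b)"
    by (simp add: exp_add exp_diff)
  also have "\<dots> \<le> 8 * pi * exp (5 * pi) * (sqrt (8 / pi) + 1) * (exp (2 * pi * y) + (b + 1)^2) / exp (2 * pi * b)"
    by (intro divide_right_mono mult_mono[OF const]) auto
  finally show ?thesis .
qed

theorem lemma6p8:
  fixes b :: real and f :: "complex \<Rightarrow> complex"
  assumes "b > 3"
    and "f holomorphic_on strip b"
    and "inj_on f (strip b)"
    and "f 0 = 0"
    and "\<And>z. z \<in> strip b \<Longrightarrow> f (z + 1) = f z + 1"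
  shows "\<forall>z \<in> strip (b - 3).
           cmod (f z - z) \<le> (8 * pi * exp (5 * pi) * (sqrt (8 / pi) + 1))
             * (exp (2 * pi * \<bar>Im z\<bar>) + (b + 1)^2) / exp (2 * pi * b)"
  using norm_sub_ident_le[OF assms(2-5)] explicit_constant_le order_trans by blast

end
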